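(* Let $\mathcal{G}$ be the cyclic digraph on $n>1$ nodes, with the weights and matrices described in the context. Let $r$ be the largest modulus among the eigenvalues of $M_0=\begin{bmatrix} I-L & 0\\ L & S\end{bmatrix}$ that remain after two copies of the eigenvalue $1$ are removed (eigenvalues counted with algebraic multiplicity). If $$\epsilon\in\Big(0,\ \frac{\sqrt2}{3+\sqrt5}\,(1-r)\Big),$$ then the deterministic algorithm with parameter $\epsilon$ achieves average consensus. Moreover, $$r=\sqrt{1-\tfrac1n+\tfrac1{2n^2}+\tfrac1n\big(1-\tfrac1{2n}\big)\cos\tfrac{2\pi}{n}}.$$
   Context: Setting: the cyclic digraph has $\mathcal{V}=\{1,\dots,n\}$ and $\mathcal{E}=\{(1,2),(2,3),\dots,(n-1,n),(n,1)\}$. An edge $(j,i)$ means that $j$ sends to $i$. Its degree is $d=1$. Weights: $a_{ij}=1/(2n)$ if $(j,i)\in\mathcal{E}$ and $0$ otherwise. Also $b_{ih}=1/n$ if $(i,h)\in\mathcal{E}$ and $0$ otherwise. Matrices: $L=D-A$, where $A=[a_{ij}]$ and $D=\mathrm{diag}(\sum_j a_{ij})$. $S=(I-\tilde D)+B$, where $B=[b_{ih}]^T$ and $\tilde D=\mathrm{diag}(\sum_h b_{ih})$. Also $M=\begin{bmatrix} I-L & \epsilon I\\ L & S-\epsilon I\end{bmatrix}$. Deterministic algorithm: $(x(k+1),s(k+1))^T=M(x(k),s(k))^T$ with $s(0)=0$. Average consensus: for every $x(0)\in\mathbb{R}^n$, $(x(k),s(k))\to(x_a\mathbf{1},0)$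 where $x_a=\mathbf{1}^Tx(0)/n$. *)

theory Defs
  imports "Jordan_Normal_Form.Matrix" "Jordan_Normal_Form.Char_Poly"
    "HOL-Computational_Algebra.Fundamental_Theorem_Algebra"
begin

text \<open>Nodes 1..n are represented by indices 0..n-1 (node i+1 is index i).
  The cyclic digraph has edges (j,i) with i = j+1 mod n (j sends to i).\<close>

definition cyc_edge :: "nat \<Rightarrow> nat \<Rightarrow> nat \<Rightarrow> bool" where
  "cyc_edge n j i \<longleftrightarrow> j < n \<and> i < n \<and> i = (j + 1) mod n"

definition a_w :: "nat \<Rightarrow> nat \<Rightarrow> nat \<Rightarrow> real" where
  "a_w n i j = (if cyc_edge n j i then 1 / (2 * real n) else 0)"

definition b_w :: "nat \<Rightarrow> nat \<Rightarrow> nat \<Rightarrow> real" where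
  "b_w n i h = (if cyc_edge n i h then 1 / real n else 0)"

definition A_mat :: "nat \<Rightarrow> real mat" where
  "A_mat n = mat n n (\<lambda>(i, j). a_w n i j)"

definition D_mat :: "nat \<Rightarrow> real mat" where
  "D_mat n = mat n n (\<lambda>(i, j). if i = j then (\<Sum>l<n. a_w n i l) else 0)"

definition L_mat :: "nat \<Rightarrow> real mat" where
  "L_mat n = D_mat n - A_mat n"

definition B_mat :: "nat \<Rightarrow> real mat" where
  "B_mat n = transpose_mat (mat n n (\<lambda>(i, h). b_w n i h))"

definition Dt_mat :: "nat \<Rightarrow> real mat" where
  "Dt_mat n = mat n n (\<lambda>(i, j). if i = j then (\<Sum>h<n. b_w n i h) else 0)"

definition S_mat :: "nat \<Rightarrow> real mat" where
  "S_mat n = (1\<^sub>m n - Dt_mat n) + B_mat n"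

definition M_mat :: "nat \<Rightarrow> real \<Rightarrow> real mat" where
  "M_mat n eps = four_block_mat (1\<^sub>m n - L_mat n) (eps \<cdot>\<^sub>m 1\<^sub>m n)
                                (L_mat n) (S_mat n - eps \<cdot>\<^sub>m 1\<^sub>m n)"

definition M0_mat :: "nat \<Rightarrow> real mat" where
  "M0_mat n = four_block_mat (1\<^sub>m n - L_mat n) (0\<^sub>m n n) (L_mat n) (S_mat n)"

definition eig_M0 :: "nat \<Rightarrow> complex multiset" where
  "eig_M0 n = proots (char_poly (map_mat complex_of_real (M0_mat n)))"

definition r_M0 :: "nat \<Rightarrow> real" where
  "r_M0 n = Max (cmod ` set_mset (eig_M0 n - {#1, 1#}))"

definition average_consensus :: "nat \<Rightarrow> real \<Rightarrow> bool" where
  "average_consensus n eps \<longleftrightarrow>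
    (\<forall>x0 \<in> carrier_vec n.
       let z0 = x0 @\<^sub>v 0\<^sub>v n;
           xa = (\<Sum>i<n. x0 $ i) / real n
       in \<forall>i < 2 * n. (\<lambda>k. ((M_mat n eps ^\<^sub>m k) *\<^sub>v z0) $ i)
              \<longlonglongrightarrow> (if i < n then xa else 0))"

end

theory Submission
  imports Defs "Jordan_Normal_Form.Schur_Decomposition"
begin

text \<open>Every block of \<open>M\<close> is a circulant bidiagonal matrix \<open>p I + q P\<close>, with \<open>P\<close> the cyclic
  shift, so the discrete Fourier transform decouples the iteration into \<open>n\<close> independent
  two-dimensional recurrences. For the mode \<open>k\<close> the recurrence matrix is
  \<open>[[a, \<epsilon>], [1 - a, 2a - 1 - \<epsilon>]]\<close> with \<open>a = 1 - (1 - \<zeta>\<^sup>k) / (2n)\<close> and \<open>\<zeta> = exp (-2\<pi>i / n)\<close>.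
  For \<open>\<epsilon> = 0\<close> it is triangular, so the spectrum of \<open>M\<^sub>0\<close> consists of the numbers \<open>a\<close> and \<open>2a - 1\<close>;
  removing the two eigenvalues \<open>1\<close> of the mode \<open>0\<close>, the largest modulus is \<open>|a\<^sub>1|\<close>, which gives
  the formula for \<open>r\<close>. The mode \<open>0\<close> keeps the sum of \<open>x\<close> and \<open>s = 0\<close>, which yields the average;
  every other mode contracts at rate \<open>r + 3\<epsilon>\<close> in the norm \<open>|x| + |s - x|\<close>, so it vanishes as
  soon as \<open>\<epsilon> < (1 - r) / 3\<close>, and the bound \<open>\<surd>2 / (3 + \<surd>5) \<cdot> (1 - r)\<close> lies below that.\<close>

definition cyc_prev :: "nat \<Rightarrow> nat \<Rightarrow> nat" where
  "cyc_prev n i = (if i = 0 then n - 1 else i - 1)"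

lemma cyc_prev_less: "0 < n \<Longrightarrow> i < n \<Longrightarrow> cyc_prev n i < n"
  by (auto simp: cyc_prev_def)

lemma cyc_prev_neq: "1 < n \<Longrightarrow> i < n \<Longrightarrow> cyc_prev n i \<noteq> i"
  by (auto simp: cyc_prev_def)

lemma Suc_mod_eq_iff_cyc_prev:
  assumes "i < n" "j < n"
  shows "i = Suc j mod n \<longleftrightarrow> j = cyc_prev n i"
  using assms by (auto simp: cyc_prev_def mod_Suc)

lemma Suc_cyc_prev_mod: "i < n \<Longrightarrow> Suc (cyc_prev n i) mod n = i"
  using Suc_mod_eq_iff_cyc_prev cyc_prev_less by (metis gr_zeroI not_less_zero)

lemma cyc_prev_Suc_mod: "j < n \<Longrightarrow> cyc_prev n (Suc j mod n) = j"
  using Suc_mod_eq_iff_cyc_prev[of "Suc j mod n" n j] by simp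

definition cyc_mat :: "nat \<Rightarrow> 'a::zero \<Rightarrow> 'a \<Rightarrow> 'a mat" where
  "cyc_mat n p q = mat n n (\<lambda>(i, j). if i = j then p else if i = Suc j mod n then q else 0)"

lemma cyc_mat_carrier [simp]: "cyc_mat n p q \<in> carrier_mat n n"
  by (simp add: cyc_mat_def)

lemma cyc_mat_index [simp]:
  "i < n \<Longrightarrow> j < n \<Longrightarrow> cyc_mat n p q $$ (i, j) = (if i = j then p else if i = Suc j mod n then q else 0)"
  by (simp add: cyc_mat_def)

lemma dim_cyc_mat [simp]: "dim_row (cyc_mat n p q) = n" "dim_col (cyc_mat n p q) = n"
  by (simp_all add: cyc_mat_def)

lemma cyc_mat_add: "cyc_mat n (p :: 'a::monoid_add) q + cyc_mat n p' q' = cyc_mat n (p + p') (q + q')"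
  by (rule eq_matI) auto

lemma cyc_mat_diff: "cyc_mat n (p :: 'a::group_add) q - cyc_mat n p' q' = cyc_mat n (p - p') (q - q')"
  by (rule eq_matI) auto

lemma smult_cyc_mat: "(a :: 'a::semiring_0) \<cdot>\<^sub>m cyc_mat n p q = cyc_mat n (a * p) (a * q)"
  by (rule eq_matI) auto

lemma one_mat_eq_cyc_mat: "1\<^sub>m n = cyc_mat n 1 0"
  by (rule eq_matI) auto

lemma zero_mat_eq_cyc_mat: "0\<^sub>m n n = cyc_mat n 0 0"
  by (rule eq_matI) auto

lemma map_cyc_mat: "f 0 = 0 \<Longrightarrow> map_mat f (cyc_mat n p q) = cyc_mat n (f p) (f q)"
  by (rule eq_matI) auto

lemma cyc_mat_mult_vec:
  fixes v :: "'a::comm_semiring_1 vec"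
  assumes "1 < n" "v \<in> carrier_vec n" "i < n"
  shows "(cyc_mat n p q *\<^sub>v v) $ i = p * v $ i + q * v $ cyc_prev n i"
proof -
  have "(cyc_mat n p q *\<^sub>v v) $ i
      = (\<Sum>j<n. (if i = j then p else if i = Suc j mod n then q else 0) * v $ j)"
    using assms by (simp add: scalar_prod_def lessThan_atLeast0)
  also have "\<dots> = (\<Sum>j<n. (if j = i then p * v $ j else 0) + (if j = cyc_prev n i then q * v $ j else 0))"
    by (rule sum.cong) (use assms cyc_prev_neq[of n i] Suc_mod_eq_iff_cyc_prev[of i n] in auto)
  also have "\<dots> = p * v $ i + q * v $ cyc_prev n i"
    using assms cyc_prev_less[of n i] by (simp add: sum.distrib)
  finally show ?thesis .
qed

lemma sum_cyc_edge_in: "i < n \<Longrightarrow> (\<Sum>j<n. if cyc_edge n j i then x else 0) = x"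
  using Suc_mod_eq_iff_cyc_prev[of i n] cyc_prev_less[of n i]
  by (simp add: cyc_edge_def cong: conj_cong)

lemma sum_cyc_edge_out: "i < n \<Longrightarrow> (\<Sum>j<n. if cyc_edge n i j then x else 0) = x"
  by (simp add: cyc_edge_def eq_commute[of _ "Suc i mod n"])

context
  fixes n :: nat
  assumes n: "1 < n"
begin

lemma L_mat_eq_cyc_mat: "L_mat n = cyc_mat n (1 / (2 * real n)) (- 1 / (2 * real n))"
proof -
  have "A_mat n = cyc_mat n 0 (1 / (2 * real n))"
    using n by (intro eq_matI) (auto simp: A_mat_def a_w_def cyc_edge_def mod_Suc)
  moreover have "D_mat n = cyc_mat n (1 / (2 * real n)) 0"
    using sum_cyc_edge_in[of _ n] by (intro eq_matI) (auto simp: D_mat_def a_w_def)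
  ultimately show ?thesis
    by (simp add: L_mat_def cyc_mat_diff)
qed

lemma S_mat_eq_cyc_mat: "S_mat n = cyc_mat n (1 - 1 / real n) (1 / real n)"
proof -
  have "B_mat n = cyc_mat n 0 (1 / real n)"
    using n by (intro eq_matI) (auto simp: B_mat_def b_w_def cyc_edge_def mod_Suc)
  moreover have "Dt_mat n = cyc_mat n (1 / real n) 0"
    using sum_cyc_edge_out[of _ n] by (intro eq_matI) (auto simp: Dt_mat_def b_w_def)
  ultimately show ?thesis
    by (simp add: S_mat_def one_mat_eq_cyc_mat cyc_mat_diff cyc_mat_add)
qed

lemma M_mat_eq_cyc_mat:
  "M_mat n e = four_block_mat
     (cyc_mat n (1 - 1 / (2 * real n)) (1 / (2 * real n))) (cyc_mat n e 0)
     (cyc_mat n (1 / (2 * real n)) (- 1 / (2 * real n))) (cyc_mat n (1 - 1 / real n - e) (1 / real n))"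
  by (simp add: M_mat_def L_mat_eq_cyc_mat S_mat_eq_cyc_mat one_mat_eq_cyc_mat
      smult_cyc_mat cyc_mat_diff)

lemma M0_mat_eq_cyc_mat:
  "M0_mat n = four_block_mat
     (cyc_mat n (1 - 1 / (2 * real n)) (1 / (2 * real n))) (0\<^sub>m n n)
     (cyc_mat n (1 / (2 * real n)) (- 1 / (2 * real n))) (cyc_mat n (1 - 1 / real n) (1 / real n))"
  by (simp add: M0_mat_def L_mat_eq_cyc_mat S_mat_eq_cyc_mat one_mat_eq_cyc_mat cyc_mat_diff)

end

definition primitive_root :: "nat \<Rightarrow> 'a::comm_ring_1 \<Rightarrow> bool" where
  "primitive_root n z \<longleftrightarrow> z ^ n = 1 \<and> (\<forall>m. 0 < m \<longrightarrow> m < n \<longrightarrow> z ^ m \<noteq> 1)"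

lemma power_mod_root:
  fixes z :: "'a::comm_ring_1"
  assumes "z ^ n = 1"
  shows "z ^ (m mod n) = z ^ m"
proof -
  have "z ^ m = z ^ (m mod n) * (z ^ n) ^ (m div n)"
    by (simp add: mod_mult_div_eq flip: power_mult power_add)
  with assms show ?thesis by simp
qed

lemma primitive_root_nonzero: "primitive_root n (z :: 'a::field) \<Longrightarrow> 0 < n \<Longrightarrow> z \<noteq> 0"
  by (auto simp: primitive_root_def power_0_left)

lemma primitive_root_inverse:
  "primitive_root n (z :: 'a::field) \<Longrightarrow> primitive_root n (inverse z)"
  by (simp add: primitive_root_def power_inverse)

lemma primitive_root_power_eqD:
  fixes z :: "'a::field"
  assumes z: "primitive_root n z" and "i < n" "j < n" "z ^ i = z ^ j"
  shows "i = j"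
proof -
  have z_power_diff: "z ^ (j - i) = 1" if "i < j" "j < n" "z ^ i = z ^ j" for i j
  proof -
    have "z \<noteq> 0" using z that by (simp add: primitive_root_nonzero)
    moreover have "z ^ i * z ^ (j - i) = z ^ j"
      using \<open>i < j\<close> by (simp flip: power_add)
    ultimately show ?thesis
      using \<open>z ^ i = z ^ j\<close> by simp
  qed
  moreover have "\<not> z ^ (j - i) = 1" if "i < j" "j < n" for i j
    using z that unfolding primitive_root_def by simp
  ultimately show ?thesis
    using assms(2-4) by (metis linorder_neqE_nat)
qed

lemma primitive_root_orthogonality:
  fixes z :: "'a::field"
  assumes z: "primitive_root n z" and i: "i < n" and j: "j < n"
  shows "(\<Sum>k<n. inverse z ^ (i * k) * z ^ (j * k)) = (if i = j then of_nat n else 0)"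
proof -
  define w where "w = inverse z ^ i * z ^ j"
  have z0: "z \<noteq> 0" using z i by (simp add: primitive_root_nonzero)
  have "(\<Sum>k<n. inverse z ^ (i * k) * z ^ (j * k)) = (\<Sum>k<n. w ^ k)"
    by (simp add: w_def power_mult power_mult_distrib)
  moreover have "w = 1 \<longleftrightarrow> i = j"
    using primitive_root_power_eqD[OF z i j] z0 by (auto simp: w_def field_simps)
  moreover have "(z ^ l) ^ n = 1" for l
    using z by (metis power_mult mult.commute power_one primitive_root_def)
  then have "w ^ n = 1"
    by (simp add: w_def power_mult_distrib power_inverse)
  ultimately show ?thesis
    by (cases "i = j") (simp_all add: geometric_sum)
qed

definition unit_root :: "nat \<Rightarrow> complex" where
  "unit_root n = cis (2 * pi / real n)"

lemma primitive_root_unit_root: "0 < n \<Longrightarrow> primitive_root n (unit_root n)"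
  unfolding primitive_root_def unit_root_def DeMoivre
proof (intro conjI allI impI)
  assume "0 < n"
  then show "cis (real n * (2 * pi / real n)) = 1" by simp
next
  fix m assume m: "0 < m" "m < n"
  show "cis (real m * (2 * pi / real n)) \<noteq> 1"
  proof
    assume "cis (real m * (2 * pi / real n)) = 1"
    then have "cos (real m * (2 * pi / real n)) = 1"
      by (metis cis.sel(1) one_complex.sel(1))
    then obtain l :: int where "real m * (2 * pi / real n) = of_int l * 2 * pi"
      by (auto simp: cos_one_2pi_int)
    then have l: "real m = of_int l * real n" using m by (simp add: field_simps)
    then have "0 < real_of_int l * real n" using m by simp
    then have "0 < l" by (simp add: zero_less_mult_iff)
    then have "real n \<le> of_int l * real n"
      using mult_right_mono[of 1 "real_of_int l" "real n"] by simp
    then show False using l m by linarith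
  qed
qed

lemma unit_root_power_cyc_prev:
  assumes "0 < n" "i < n"
  shows "unit_root n ^ cyc_prev n i = unit_root n ^ i * inverse (unit_root n)"
proof -
  have root: "primitive_root n (unit_root n)"
    using assms(1) by (rule primitive_root_unit_root)
  then have "unit_root n ^ i = unit_root n ^ cyc_prev n i * unit_root n"
    using power_mod_root[of "unit_root n" n "Suc (cyc_prev n i)"] Suc_cyc_prev_mod[OF assms(2)]
    by (simp add: primitive_root_def)
  then show ?thesis
    using primitive_root_nonzero[OF root assms(1)] by (simp add: field_simps)
qed

definition dft :: "nat \<Rightarrow> real vec \<Rightarrow> nat \<Rightarrow> complex" where
  "dft n v k = (\<Sum>i<n. of_real (v $ i) * inverse (unit_root n) ^ (i * k))"

lemma dft_add:
  "v \<in> carrier_vec n \<Longrightarrow> w \<in> carrier_vec n \<Longrightarrow> dft n (v + w) k = dft n v k + dft n w k"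
  by (simp add: dft_def sum.distrib algebra_simps)

lemma dft_cyc_prev:
  assumes "0 < n"
  shows "(\<Sum>i<n. of_real (v $ cyc_prev n i) * inverse (unit_root n) ^ (i * k))
    = inverse (unit_root n) ^ k * dft n v k"
proof -
  let ?z = "inverse (unit_root n)"
  have z: "?z ^ n = 1"
    using primitive_root_inverse[OF primitive_root_unit_root[OF assms]] by (simp add: primitive_root_def)
  have "(\<Sum>i<n. of_real (v $ cyc_prev n i) * ?z ^ (i * k))
      = (\<Sum>j<n. of_real (v $ j) * (?z ^ (Suc j mod n)) ^ k)"
    by (rule sum.reindex_bij_witness[of _ "\<lambda>j. Suc j mod n" "cyc_prev n"])
      (auto simp: Suc_cyc_prev_mod cyc_prev_Suc_mod cyc_prev_less power_mult)
  also have "\<dots> = (\<Sum>j<n. ?z ^ k * (of_real (v $ j) * ?z ^ (j * k)))"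
  proof (rule sum.cong[OF refl])
    fix j
    have "(?z ^ (Suc j mod n)) ^ k = ?z ^ k * ?z ^ (j * k)"
      by (simp only: power_mod_root[OF z] power_Suc power_mult_distrib power_mult)
    then show "of_real (v $ j) * (?z ^ (Suc j mod n)) ^ k = ?z ^ k * (of_real (v $ j) * ?z ^ (j * k))"
      by simp
  qed
  finally show ?thesis
    by (simp add: dft_def sum_distrib_left)
qed

lemma dft_cyc_mat:
  assumes "1 < n" "v \<in> carrier_vec n"
  shows "dft n (cyc_mat n p q *\<^sub>v v) k = (of_real p + of_real q * inverse (unit_root n) ^ k) * dft n v k"
proof -
  let ?z = "inverse (unit_root n)"
  have "dft n (cyc_mat n p q *\<^sub>v v) k
      = (\<Sum>i<n. of_real p * (of_real (v $ i) * ?z ^ (i * k))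
               + of_real q * (of_real (v $ cyc_prev n i) * ?z ^ (i * k)))"
    unfolding dft_def
    by (rule sum.cong) (use assms in \<open>auto simp: cyc_mat_mult_vec algebra_simps simp del: index_mult_mat_vec\<close>)
  also have "\<dots> = (of_real p + of_real q * ?z ^ k) * dft n v k"
    using dft_cyc_prev[of n v k] assms(1)
    by (simp add: sum.distrib flip: sum_distrib_left) (simp add: dft_def algebra_simps)
  finally show ?thesis .
qed

lemma dft_inversion:
  assumes "j < n"
  shows "of_real (v $ j) = (\<Sum>k<n. dft n v k * unit_root n ^ (j * k)) / of_nat n"
proof -
  have root: "primitive_root n (unit_root n)"
    using assms by (intro primitive_root_unit_root) simp
  have "(\<Sum>k<n. dft n v k * unit_root n ^ (j * k))
      = (\<Sum>i<n. of_real (v $ i) * (\<Sum>k<n. inverse (unit_root n) ^ (i * k) * unit_root n ^ (j * k)))"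
    unfolding dft_def sum_distrib_right sum_distrib_left
    by (subst sum.swap) (simp add: mult.assoc)
  also have "\<dots> = (\<Sum>i<n. if i = j then of_real (v $ i) * of_nat n else 0)"
    by (rule sum.cong) (simp_all add: primitive_root_orthogonality[OF root _ assms])
  also have "\<dots> = of_real (v $ j) * of_nat n"
    using assms by simp
  finally show ?thesis
    using assms by simp
qed

lemma cyc_mat_eigenvalue:
  fixes p q :: complex
  assumes "1 < n"
  shows "eigenvalue (cyc_mat n p q) (p + q * inverse (unit_root n) ^ k)"
proof -
  let ?w = "vec n (\<lambda>i. (unit_root n ^ i) ^ k)"
  have "(cyc_mat n p q *\<^sub>v ?w) $ i = (p + q * inverse (unit_root n) ^ k) * ?w $ i" if "i < n" for i
  proof -
    have "(cyc_mat n p q *\<^sub>v ?w) $ i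
        = p * (unit_root n ^ i) ^ k + q * (unit_root n ^ i * inverse (unit_root n)) ^ k"
      using assms that
      by (simp add: cyc_mat_mult_vec cyc_prev_less unit_root_power_cyc_prev del: index_mult_mat_vec)
    then show ?thesis
      using that by (simp add: power_mult_distrib ring_distribs mult_ac)
  qed
  then have "cyc_mat n p q *\<^sub>v ?w = (p + q * inverse (unit_root n) ^ k) \<cdot>\<^sub>v ?w"
    by (intro eq_vecI) auto
  moreover have "?w \<noteq> 0\<^sub>v n"
  proof
    assume "?w = 0\<^sub>v n"
    then have "?w $ 0 = 0" using assms by simp
    then show False using assms by simp
  qed
  ultimately show ?thesis
    unfolding eigenvalue_def eigenvector_def by (intro exI[of _ ?w]) simp
qed

lemma proots_char_poly_eq_distinct_eigenvalues:
  fixes A :: "complex mat"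
  assumes A: "A \<in> carrier_mat n n" and "distinct es" "length es = n"
    and eig: "\<And>x. x \<in> set es \<Longrightarrow> eigenvalue A x"
  shows "proots (char_poly A) = mset es"
proof -
  have "coeff (char_poly A) n = 1" and deg: "degree (char_poly A) = n"
    using degree_monic_char_poly[OF A] by auto
  then have nz: "char_poly A \<noteq> 0" by auto
  have "mset es \<subseteq># proots (char_poly A)"
  proof (rule mset_subset_eqI)
    fix x
    show "count (mset es) x \<le> count (proots (char_poly A)) x"
    proof (cases "x \<in> set es")
      case True
      then have "poly (char_poly A) x = 0"
        using eig eigenvalue_root_char_poly[OF A] by auto
      then have "1 \<le> count (proots (char_poly A)) x"
        using nz by (simp add: Suc_le_eq order_root)
      then show ?thesis
        using \<open>distinct es\<close> by (simp add: distinct_count_atmost_1 True)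
    next
      case False
      then have "count (mset es) x = 0" by (simp add: count_eq_zero_iff)
      then show ?thesis by linarith
    qed
  qed
  moreover have "size (proots (char_poly A)) = size (mset es)"
    using deg \<open>length es = n\<close> by (simp add: size_proots_complex)
  ultimately show ?thesis
    by (metis mset_subset_size subset_mset.le_less nat_less_le)
qed

lemma proots_char_poly_cyc_mat:
  fixes p q :: complex
  assumes "1 < n" "q \<noteq> 0"
  shows "proots (char_poly (cyc_mat n p q)) = mset (map (\<lambda>k. p + q * inverse (unit_root n) ^ k) [0..<n])"
proof (rule proots_char_poly_eq_distinct_eigenvalues)
  have "primitive_root n (inverse (unit_root n))"
    using assms by (intro primitive_root_inverse primitive_root_unit_root) simp
  then show "distinct (map (\<lambda>k. p + q * inverse (unit_root n) ^ k) [0..<n])"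
    using assms(2) by (auto simp: distinct_map inj_on_def dest: primitive_root_power_eqD)
qed (use assms cyc_mat_eigenvalue in auto)

text \<open>The \<open>k\<close>-th eigenvalue of \<open>cyc_mat n (1 - c) c\<close>; the blocks \<open>I - L\<close> and \<open>S\<close> are the
  cases \<open>c = 1 / (2n)\<close> and \<open>c = 1 / n\<close>.\<close>
definition lazy_cycle_eigenvalue :: "nat \<Rightarrow> real \<Rightarrow> nat \<Rightarrow> complex" where
  "lazy_cycle_eigenvalue n c k = of_real (1 - c) + of_real c * inverse (unit_root n) ^ k"

lemma eig_M0_eq:
  assumes n: "1 < n"
  shows "eig_M0 n = mset (map (lazy_cycle_eigenvalue n (1 / (2 * real n))) [0..<n])
                  + mset (map (lazy_cycle_eigenvalue n (1 / real n)) [0..<n])"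
proof -
  let ?A = "cyc_mat n (complex_of_real (1 - 1 / (2 * real n))) (of_real (1 / (2 * real n)))"
  let ?C = "cyc_mat n (complex_of_real (1 / (2 * real n))) (of_real (- 1 / (2 * real n)))"
  let ?D = "cyc_mat n (complex_of_real (1 - 1 / real n)) (of_real (1 / real n))"
  have "map_mat complex_of_real (M0_mat n) = four_block_mat ?A (0\<^sub>m n n) ?C ?D"
    unfolding M0_mat_eq_cyc_mat[OF n]
    by (subst map_four_block_mat[OF cyc_mat_carrier zero_carrier_mat cyc_mat_carrier cyc_mat_carrier])
      (simp only: zero_mat_eq_cyc_mat map_cyc_mat of_real_0)
  moreover have "\<exists>es. char_poly B = (\<Prod>a\<leftarrow>es. [:- a, 1:])" if "B \<in> carrier_mat n n" for B :: "complex mat"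
    using char_poly_factorized[OF that] by blast
  ultimately have "char_poly (map_mat complex_of_real (M0_mat n)) = char_poly ?A * char_poly ?D"
    by (intro char_poly_0_block') auto
  moreover have "char_poly ?A \<noteq> 0" "char_poly ?D \<noteq> 0"
    using degree_monic_char_poly[OF cyc_mat_carrier] by (metis one_neq_zero coeff_0)+
  moreover have "complex_of_real (1 / (2 * real n)) \<noteq> 0" "complex_of_real (1 / real n) \<noteq> 0"
    using n by auto
  ultimately show ?thesis
    unfolding eig_M0_def lazy_cycle_eigenvalue_def[abs_def]
    by (simp only: proots_mult proots_char_poly_cyc_mat[OF n] not_False_eq_True)
qed

lemma lazy_cycle_eigenvalue_0 [simp]: "lazy_cycle_eigenvalue n c 0 = 1"
  by (simp add: lazy_cycle_eigenvalue_def)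

lemma lazy_cycle_eigenvalue_double: "2 * lazy_cycle_eigenvalue n c k - 1 = lazy_cycle_eigenvalue n (2 * c) k"
  by (simp add: lazy_cycle_eigenvalue_def algebra_simps)

lemma cmod_lazy_cycle_eigenvalue_sq:
  "cmod (lazy_cycle_eigenvalue n c k) ^ 2 = 1 - 2 * c * (1 - c) * (1 - cos (2 * pi * real k / real n))"
proof -
  let ?t = "2 * pi * real k / real n"
  have "inverse (unit_root n) ^ k = cis (- ?t)"
    by (simp add: unit_root_def DeMoivre power_inverse) (simp add: mult.commute)
  then have "cmod (lazy_cycle_eigenvalue n c k) ^ 2 = ((1 - c) + c * cos ?t) ^ 2 + (c * sin ?t) ^ 2"
    by (simp add: lazy_cycle_eigenvalue_def cmod_power2)
  also have "\<dots> = 1 - 2 * c * (1 - c) * (1 - cos ?t)"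
  proof -
    have "((1 - c) + c * x) ^ 2 + (c * y) ^ 2 = (1 - c) ^ 2 + 2 * c * (1 - c) * x + c ^ 2 * (y ^ 2 + x ^ 2)"
      for x y :: real
      by (simp add: power2_eq_square algebra_simps)
    from this[of "cos ?t" "sin ?t"] show ?thesis
      by (simp add: power2_eq_square algebra_simps)
  qed
  finally show ?thesis .
qed

lemma cos_le_cos_2pi_div:
  assumes "1 \<le> k" "k < n"
  shows "cos (2 * pi * real k / real n) \<le> cos (2 * pi / real n)"
proof -
  have half: "cos (2 * pi * real j / real n) \<le> cos (2 * pi / real n)" if "1 \<le> j" "2 * j \<le> n" for j
    using that by (subst cos_mono_le_eq) (auto simp: field_simps)
  show ?thesis
  proof (cases "2 * k \<le> n")
    case False
    have "cos (2 * pi * real k / real n) = cos (2 * pi - 2 * pi * real k / real n)"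
      by simp
    also have "2 * pi - 2 * pi * real k / real n = 2 * pi * real (n - k) / real n"
      using assms by (simp add: field_simps)
    finally show ?thesis
      using False assms half[of "n - k"] by simp
  qed (use assms half in simp)
qed

lemma cmod_lazy_cycle_eigenvalue_le_first:
  assumes "0 \<le> c" "c \<le> 1" "1 \<le> k" "k < n"
  shows "cmod (lazy_cycle_eigenvalue n c k) \<le> cmod (lazy_cycle_eigenvalue n c 1)"
proof (rule power2_le_imp_le)
  show "cmod (lazy_cycle_eigenvalue n c k) ^ 2 \<le> cmod (lazy_cycle_eigenvalue n c 1) ^ 2"
    unfolding cmod_lazy_cycle_eigenvalue_sq using assms cos_le_cos_2pi_div[OF assms(3,4)]
    by (intro diff_left_mono mult_left_mono) auto
qed simp

lemma cmod_lazy_cycle_eigenvalue_antimono: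
  assumes "0 \<le> c" "c \<le> c'" "c + c' \<le> 1"
  shows "cmod (lazy_cycle_eigenvalue n c' k) \<le> cmod (lazy_cycle_eigenvalue n c k)"
proof (rule power2_le_imp_le)
  have "c * (1 - c) \<le> c' * (1 - c')"
    using assms mult_nonneg_nonneg[of "c' - c" "1 - c - c'"] by (simp add: algebra_simps)
  then show "cmod (lazy_cycle_eigenvalue n c' k) ^ 2 \<le> cmod (lazy_cycle_eigenvalue n c k) ^ 2"
    unfolding cmod_lazy_cycle_eigenvalue_sq
    using mult_right_mono[of _ _ "1 - cos (2 * pi * real k / real n)"] by simp
qed simp

context
  fixes n :: nat
  assumes n: "1 < n"
begin

lemma r_M0_eq: "r_M0 n = cmod (lazy_cycle_eigenvalue n (1 / (2 * real n)) 1)"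
proof -
  let ?a = "lazy_cycle_eigenvalue n (1 / (2 * real n))" and ?b = "lazy_cycle_eigenvalue n (1 / real n)"
  have "[0..<n] = 0 # [1..<n]"
    using n by (simp add: upt_rec)
  then have "set_mset (eig_M0 n - {#1, 1#}) = ?a ` {1..<n} \<union> ?b ` {1..<n}"
    using n by (simp add: eig_M0_eq)
  moreover have "cmod (?a k) \<le> cmod (?a 1)" "cmod (?b k) \<le> cmod (?a 1)" if "k \<in> {1..<n}" for k
    using that n cmod_lazy_cycle_eigenvalue_le_first[of "1 / (2 * real n)" k n]
      cmod_lazy_cycle_eigenvalue_antimono[of "1 / (2 * real n)" "1 / real n" n k]
    by (auto simp: field_simps)
  ultimately show ?thesis
    unfolding r_M0_def using n by (intro Max_eqI) auto
qed

lemma cmod_lazy_cycle_eigenvalues_le_r_M0: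
  assumes "1 \<le> k" "k < n"
  shows "cmod (lazy_cycle_eigenvalue n (1 / (2 * real n)) k) \<le> r_M0 n"
    and "cmod (lazy_cycle_eigenvalue n (1 / real n) k) \<le> r_M0 n"
  using assms n cmod_lazy_cycle_eigenvalue_le_first[of "1 / (2 * real n)" k n]
    cmod_lazy_cycle_eigenvalue_antimono[of "1 / (2 * real n)" "1 / real n" n k]
  by (auto simp: r_M0_eq field_simps)

lemma r_M0_formula:
  "r_M0 n = sqrt (1 - 1 / real n + 1 / (2 * (real n)\<^sup>2)
                  + (1 / real n) * (1 - 1 / (2 * real n)) * cos (2 * pi / real n))"
proof -
  have "r_M0 n = sqrt (cmod (lazy_cycle_eigenvalue n (1 / (2 * real n)) 1) ^ 2)"
    by (simp add: r_M0_eq)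
  also have "cmod (lazy_cycle_eigenvalue n (1 / (2 * real n)) 1) ^ 2
      = 1 - 1 / real n + 1 / (2 * (real n)\<^sup>2) + (1 / real n) * (1 - 1 / (2 * real n)) * cos (2 * pi / real n)"
    unfolding cmod_lazy_cycle_eigenvalue_sq using n by (simp add: field_simps power2_eq_square)
  finally show ?thesis .
qed

end

text \<open>In the coordinates \<open>(x, s - x)\<close> the step matrix is \<open>diag(a, 2a - 1)\<close> plus a perturbation of
  column-sum norm \<open>3e\<close>.\<close>
lemma two_mode_contraction_step:
  fixes x s x' s' a :: complex and e \<rho> :: real
  assumes x': "x' = a * x + of_real e * s"
    and s': "s' = (1 - a) * x + (2 * a - 1 - of_real e) * s"
    and "cmod a \<le> \<rho>" "cmod (2 * a - 1) \<le> \<rho>" "0 \<le> e"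
  shows "cmod x' + cmod (s' - x') \<le> (\<rho> + 3 * e) * (cmod x + cmod (s - x))"
proof -
  have "x' = (a + of_real e) * x + of_real e * (s - x)"
    using x' by (simp add: algebra_simps)
  then have "cmod x' \<le> (cmod a + e) * cmod x + e * cmod (s - x)"
    using \<open>0 \<le> e\<close> norm_triangle_ineq[of a "of_real e"]
    by (auto simp: norm_mult intro!: order.trans[OF norm_triangle_ineq] add_mono mult_right_mono)
  moreover have "cmod (s' - x') \<le> 2 * e * cmod x + (cmod (2 * a - 1) + 2 * e) * cmod (s - x)"
  proof -
    have "s' - x' = (2 * a - 1 - 2 * of_real e) * (s - x) - 2 * of_real e * x"
      using x' s' by (simp add: algebra_simps)
    then have "cmod (s' - x') \<le> cmod (2 * a - 1 - 2 * of_real e) * cmod (s - x) + 2 * e * cmod x"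
      using \<open>0 \<le> e\<close> norm_triangle_ineq4[of "(2 * a - 1 - 2 * of_real e) * (s - x)" "2 * of_real e * x"]
      by (simp add: norm_mult)
    also have "\<dots> \<le> (cmod (2 * a - 1) + 2 * e) * cmod (s - x) + 2 * e * cmod x"
      using \<open>0 \<le> e\<close> norm_triangle_ineq4[of "2 * a - 1" "2 * of_real e"]
      by (intro add_mono mult_right_mono) auto
    finally show ?thesis by simp
  qed
  ultimately have "cmod x' + cmod (s' - x')
      \<le> (cmod a + 3 * e) * cmod x + (cmod (2 * a - 1) + 3 * e) * cmod (s - x)"
    by (simp add: algebra_simps)
  also have "\<dots> \<le> (\<rho> + 3 * e) * cmod x + (\<rho> + 3 * e) * cmod (s - x)"
    using assms by (intro add_mono mult_right_mono) auto
  finally show ?thesis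
    by (simp add: algebra_simps)
qed

lemma two_mode_recurrence_tendsto_zero:
  fixes x s :: "nat \<Rightarrow> complex" and a :: complex and e \<rho> :: real
  assumes x: "\<And>t. x (Suc t) = a * x t + of_real e * s t"
    and s: "\<And>t. s (Suc t) = (1 - a) * x t + (2 * a - 1 - of_real e) * s t"
    and a: "cmod a \<le> \<rho>" "cmod (2 * a - 1) \<le> \<rho>" and e: "0 \<le> e" and contr: "\<rho> + 3 * e < 1"
  shows "x \<longlonglongrightarrow> 0" "s \<longlonglongrightarrow> 0"
proof -
  define N where "N t = cmod (x t) + cmod (s t - x t)" for t
  have \<rho>: "0 \<le> \<rho> + 3 * e"
    using a(1) e norm_ge_zero[of a] by linarith
  have N_le: "N t \<le> (\<rho> + 3 * e) ^ t * N 0" for t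
  proof (induction t)
    case (Suc t)
    have "N (Suc t) \<le> (\<rho> + 3 * e) * N t"
      unfolding N_def by (rule two_mode_contraction_step[OF x s a e])
    also have "\<dots> \<le> (\<rho> + 3 * e) ^ Suc t * N 0"
      using mult_left_mono[OF Suc.IH \<rho>] by (simp add: mult.assoc)
    finally show ?case .
  qed (simp add: N_def)
  have N_lim: "(\<lambda>t. (\<rho> + 3 * e) ^ t * N 0) \<longlonglongrightarrow> 0"
    using \<rho> contr by (intro tendsto_mult_left_zero LIMSEQ_power_zero) simp
  have "cmod (x t) \<le> (\<rho> + 3 * e) ^ t * N 0" "cmod (s t) \<le> (\<rho> + 3 * e) ^ t * N 0" for t
  proof -
    have "cmod (s t) \<le> cmod (x t) + cmod (s t - x t)"
      using norm_triangle_ineq[of "x t" "s t - x t"] by simp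
    then show "cmod (x t) \<le> (\<rho> + 3 * e) ^ t * N 0" "cmod (s t) \<le> (\<rho> + 3 * e) ^ t * N 0"
      using N_le[of t] norm_ge_zero[of "s t - x t"] unfolding N_def by linarith+
  qed
  then have "norm (x t) \<le> norm ((\<rho> + 3 * e) ^ t * N 0) * 1"
    "norm (s t) \<le> norm ((\<rho> + 3 * e) ^ t * N 0) * 1" for t
    using abs_ge_self order_trans by (metis mult_1_right real_norm_def)+
  then show "x \<longlonglongrightarrow> 0" "s \<longlonglongrightarrow> 0"
    by (auto intro!: tendsto_0_le[OF N_lim, where K = 1] always_eventually)
qed

lemma tendsto_index_if_tendsto_dft:
  assumes j: "j < n"
    and lim: "\<And>k. k < n \<Longrightarrow> (\<lambda>t. dft n (v t) k) \<longlonglongrightarrow> (if k = 0 then of_real l else 0)"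
  shows "(\<lambda>t. v t $ j) \<longlonglongrightarrow> l / real n"
proof -
  have "(\<lambda>t. (\<Sum>k<n. dft n (v t) k * unit_root n ^ (j * k)) / of_nat n)
      \<longlonglongrightarrow> (\<Sum>k<n. (if k = 0 then of_real l else 0) * unit_root n ^ (j * k)) / of_nat n"
    using lim j by (intro tendsto_intros) auto
  also have "(\<Sum>k<n. (if k = 0 then of_real l else 0) * unit_root n ^ (j * k)) / of_nat n
      = of_real (l / real n)"
    using j by (simp add: if_distrib[of "\<lambda>z. z * _"] cong: if_cong)
  finally have "(\<lambda>t. of_real (v t $ j)) \<longlonglongrightarrow> (of_real (l / real n) :: complex)"
    by (simp flip: dft_inversion[OF j])
  then show ?thesis
    by (rule tendsto_of_real_iff[THEN iffD1])
qed

lemma pow_mat_Suc_mult_vec: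
  assumes "A \<in> carrier_mat m m" "v \<in> carrier_vec m"
  shows "A ^\<^sub>m Suc t *\<^sub>v v = A *\<^sub>v (A ^\<^sub>m t *\<^sub>v v)"
proof -
  have "A ^\<^sub>m Suc t = A * A ^\<^sub>m t"
  proof (induction t)
    case (Suc t)
    have "A ^\<^sub>m Suc (Suc t) = A * A ^\<^sub>m t * A"
      using Suc by simp
    also have "\<dots> = A * A ^\<^sub>m Suc t"
      using assms(1) by (simp add: assoc_mult_mat[of _ m m _ m _ m])
    finally show ?case .
  qed (use assms(1) in simp)
  then show ?thesis
    using assms by (simp add: assoc_mult_mat_vec[of _ m m _ m])
qed

lemma vec_first_append: "v \<in> carrier_vec n \<Longrightarrow> vec_first (v @\<^sub>v w) n = v"
  by (intro eq_vecI) (auto simp: vec_first_def)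

lemma vec_last_append: "w \<in> carrier_vec m \<Longrightarrow> vec_last (v @\<^sub>v w) m = w"
  by (intro eq_vecI) (auto simp: vec_last_def)

context
  fixes n :: nat
  assumes n: "1 < n"
begin

lemma M_mat_carrier: "M_mat n e \<in> carrier_mat (n + n) (n + n)"
  unfolding M_mat_eq_cyc_mat[OF n] by (rule four_block_carrier_mat) auto

lemma dft_M_mat_mult_vec:
  fixes z :: "real vec"
  assumes z: "z \<in> carrier_vec (n + n)"
  shows "dft n (vec_first (M_mat n e *\<^sub>v z) n) k
      = lazy_cycle_eigenvalue n (1 / (2 * real n)) k * dft n (vec_first z n) k
        + of_real e * dft n (vec_last z n) k"
    and "dft n (vec_last (M_mat n e *\<^sub>v z) n) k
      = (1 - lazy_cycle_eigenvalue n (1 / (2 * real n)) k) * dft n (vec_first z n) k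
        + (2 * lazy_cycle_eigenvalue n (1 / (2 * real n)) k - 1 - of_real e) * dft n (vec_last z n) k"
proof -
  let ?x = "vec_first z n" and ?s = "vec_last z n"
  have "M_mat n e *\<^sub>v z = M_mat n e *\<^sub>v (?x @\<^sub>v ?s)"
    using z by simp
  also have "\<dots> = (cyc_mat n (1 - 1 / (2 * real n)) (1 / (2 * real n)) *\<^sub>v ?x + cyc_mat n e 0 *\<^sub>v ?s)
      @\<^sub>v (cyc_mat n (1 / (2 * real n)) (- 1 / (2 * real n)) *\<^sub>v ?x
          + cyc_mat n (1 - 1 / real n - e) (1 / real n) *\<^sub>v ?s)"
    unfolding M_mat_eq_cyc_mat[OF n] by (rule four_block_mat_mult_vec) auto
  finally have Mz: "M_mat n e *\<^sub>v z = \<dots>" .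
  have cyc_carrier: "cyc_mat n p q *\<^sub>v v \<in> carrier_vec n" for p q :: real and v
    by (rule carrier_vecI) simp
  then have first: "vec_first (M_mat n e *\<^sub>v z) n
      = cyc_mat n (1 - 1 / (2 * real n)) (1 / (2 * real n)) *\<^sub>v ?x + cyc_mat n e 0 *\<^sub>v ?s"
    and last: "vec_last (M_mat n e *\<^sub>v z) n
      = cyc_mat n (1 / (2 * real n)) (- 1 / (2 * real n)) *\<^sub>v ?x
          + cyc_mat n (1 - 1 / real n - e) (1 / real n) *\<^sub>v ?s"
    unfolding Mz by (simp_all add: vec_first_append vec_last_append)
  let ?z = "inverse (unit_root n) ^ k" and ?a = "lazy_cycle_eigenvalue n (1 / (2 * real n)) k"
  have "of_real (1 - 1 / (2 * real n)) + of_real (1 / (2 * real n)) * ?z = ?a"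
    by (simp add: lazy_cycle_eigenvalue_def)
  moreover have "of_real e + of_real 0 * ?z = of_real e"
    by simp
  moreover have "of_real (1 / (2 * real n)) + of_real (- 1 / (2 * real n)) * ?z = 1 - ?a"
    by (simp add: lazy_cycle_eigenvalue_def)
  moreover have "of_real (1 - 1 / real n - e) + of_real (1 / real n) * ?z = 2 * ?a - 1 - of_real e"
    by (simp add: lazy_cycle_eigenvalue_def algebra_simps)
  ultimately show "dft n (vec_first (M_mat n e *\<^sub>v z) n) k = ?a * dft n ?x k + of_real e * dft n ?s k"
    and "dft n (vec_last (M_mat n e *\<^sub>v z) n) k
      = (1 - ?a) * dft n ?x k + (2 * ?a - 1 - of_real e) * dft n ?s k"
    unfolding first last dft_add[OF cyc_carrier cyc_carrier]
      dft_cyc_mat[OF n vec_first_carrier] dft_cyc_mat[OF n vec_last_carrier]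
    by simp_all
qed

lemma average_consensus_if_contraction:
  assumes e: "0 < e" and contr: "r_M0 n + 3 * e < 1"
  shows "average_consensus n e"
  unfolding average_consensus_def Let_def
proof (intro ballI allI impI)
  fix x0 :: "real vec" and i
  assume x0: "x0 \<in> carrier_vec n" and i: "i < 2 * n"
  define z where "z t = M_mat n e ^\<^sub>m t *\<^sub>v (x0 @\<^sub>v 0\<^sub>v n)" for t
  define X where "X k t = dft n (vec_first (z t) n) k" for k t
  define S where "S k t = dft n (vec_last (z t) n) k" for k t
  have z_carrier: "z t \<in> carrier_vec (n + n)" for t
    unfolding z_def using x0 by (intro mult_mat_vec_carrier[OF pow_carrier_mat[OF M_mat_carrier]]) auto
  have z_Suc: "z (Suc t) = M_mat n e *\<^sub>v z t" for t
    unfolding z_def using M_mat_carrier x0 by (intro pow_mat_Suc_mult_vec) auto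
  let ?a = "lazy_cycle_eigenvalue n (1 / (2 * real n))"
  have X_Suc: "X k (Suc t) = ?a k * X k t + of_real e * S k t"
    and S_Suc: "S k (Suc t) = (1 - ?a k) * X k t + (2 * ?a k - 1 - of_real e) * S k t" for k t
    unfolding X_def S_def z_Suc using dft_M_mat_mult_vec[OF z_carrier] by simp_all
  have "z 0 = x0 @\<^sub>v 0\<^sub>v n"
    unfolding z_def using x0 carrier_matD(1)[OF M_mat_carrier] by simp
  then have X0: "X k 0 = dft n x0 k" and S0: "S k 0 = 0" for k
    using x0 by (simp_all add: X_def S_def vec_first_append vec_last_append dft_def)
  have S_mode0: "S 0 t = 0" for t
    by (induction t) (simp_all add: S0 S_Suc)
  have X_mode0: "X 0 t = of_real (\<Sum>j<n. x0 $ j)" for t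
    by (induction t) (simp_all add: X0 X_Suc S_mode0 dft_def)
  have modes: "X k \<longlonglongrightarrow> 0" "S k \<longlonglongrightarrow> 0" if "1 \<le> k" "k < n" for k
  proof -
    have "cmod (2 * ?a k - 1) \<le> r_M0 n"
      using cmod_lazy_cycle_eigenvalues_le_r_M0(2)[OF n that] by (simp add: lazy_cycle_eigenvalue_double)
    then show "X k \<longlonglongrightarrow> 0" "S k \<longlonglongrightarrow> 0"
      using two_mode_recurrence_tendsto_zero[where x = "X k" and s = "S k", OF X_Suc S_Suc
          cmod_lazy_cycle_eigenvalues_le_r_M0(1)[OF n that] _ less_imp_le[OF e] contr]
      by auto
  qed
  have "(\<lambda>t. z t $ i) \<longlonglongrightarrow> (if i < n then (\<Sum>j<n. x0 $ j) / real n else 0)"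
  proof (cases "i < n")
    case True
    have "(\<lambda>t. vec_first (z t) n $ i) \<longlonglongrightarrow> (\<Sum>j<n. x0 $ j) / real n"
      using True modes(1) X_mode0
      by (intro tendsto_index_if_tendsto_dft) (auto simp: X_def[symmetric] not_less_eq_eq)
    then show ?thesis
      using True by (simp add: vec_first_def)
  next
    case False
    have "(\<lambda>t. vec_last (z t) n $ (i - n)) \<longlonglongrightarrow> 0 / real n"
      using False i modes(2) S_mode0
      by (intro tendsto_index_if_tendsto_dft) (auto simp: S_def[symmetric] not_less_eq_eq)
    moreover have "vec_last (z t) n $ (i - n) = z t $ i" for t
    proof -
      have "z t $ i = (vec_first (z t) n @\<^sub>v vec_last (z t) n) $ i"
        using z_carrier[of t] by simp
      also have "\<dots> = vec_last (z t) n $ (i - n)"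
        using False i by (simp add: mult_2)
      finally show ?thesis ..
    qed
    ultimately show ?thesis
      using False by simp
  qed
  then show "(\<lambda>t. (M_mat n e ^\<^sub>m t *\<^sub>v (x0 @\<^sub>v 0\<^sub>v n)) $ i)
      \<longlonglongrightarrow> (if i < n then (\<Sum>j<n. x0 $ j) / real n else 0)"
    by (simp add: z_def)
qed

end

lemma sqrt2_div_3_plus_sqrt5_less_third: "sqrt 2 / (3 + sqrt 5) < 1 / 3"
proof -
  have "sqrt 2 < 3 / 2"
    by (rule real_less_lsqrt) (auto simp: power2_eq_square)
  moreover have "2 \<le> sqrt 5"
    by (rule real_le_rsqrt) auto
  ultimately show ?thesis
    by (simp add: field_simps add_pos_nonneg)
qed

theorem proposition5:
  fixes n :: nat
  assumes "n > 1"
  shows "(\<forall>eps::real. 0 < eps \<and> eps < sqrt 2 / (3 + sqrt 5) * (1 - r_M0 n)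
                      \<longrightarrow> average_consensus n eps) \<and>
         r_M0 n = sqrt (1 - 1 / real n + 1 / (2 * (real n)\<^sup>2)
                        + (1 / real n) * (1 - 1 / (2 * real n)) * cos (2 * pi / real n))"
proof (intro conjI allI impI)
  fix eps :: real
  assume "0 < eps \<and> eps < sqrt 2 / (3 + sqrt 5) * (1 - r_M0 n)"
  then have eps: "0 < eps" "eps < sqrt 2 / (3 + sqrt 5) * (1 - r_M0 n)"
    by auto
  then have "0 < sqrt 2 / (3 + sqrt 5) * (1 - r_M0 n)"
    by linarith
  moreover have "0 < sqrt 2 / (3 + sqrt 5)"
    by (simp add: add_pos_nonneg)
  ultimately have "0 < 1 - r_M0 n"
    by (rule zero_less_mult_pos)
  then have "sqrt 2 / (3 + sqrt 5) * (1 - r_M0 n) < 1 / 3 * (1 - r_M0 n)"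
    by (rule mult_strict_right_mono[OF sqrt2_div_3_plus_sqrt5_less_third])
  then have "eps < 1 / 3 * (1 - r_M0 n)"
    using eps(2) by linarith
  then have "r_M0 n + 3 * eps < 1"
    by (simp add: field_simps)
  then show "average_consensus n eps"
    using average_consensus_if_contraction[OF assms] eps by blast
qed (rule r_M0_formula[OF assms])

end
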